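(* Let $f=\sum_{P\in\mathcal{M}} a_P x^P$ be a nonzero real polynomial in $x_1,\ldots,x_n$, where $\mathcal{M}\subseteq\mathbb{N}^n$ is the set of exponent vectors of monomials occurring in $f$ (so $a_P\neq 0$ for $P\in\mathcal{M}$). Then for every integer $k\ge 0$, $$\dim \partial^{=k} f \geq \frac{\sum_{P \in \mathcal{M}} \binom{\sup(P)}{k}a_P^2}{|\mathcal{M}|\sum_{P \in \mathcal{M}} a_P^2}.$$
   Context: For $\alpha\in\mathbb{N}^n$, $x^\alpha = x_1^{\alpha_1}\cdots x_n^{\alpha_n}/(\alpha_1!\cdots\alpha_n!)$ (scaled monomial basis); the coefficients $a_P$ are with respect to this basis. $\sup(P)$ is the number of indices $i$ with $P_i>0$. For $\beta\in\mathbb{N}^n$, $\partial_\beta f$ is the partial derivative differentiating $\beta_i$ times with respect to $x_i$; $\partial^{=k} f$ is the real linear span of all $\partial_\beta f$ with $\beta_1+\cdots+\beta_n=k$. *)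

theory Defs
  imports Complex_Main "HOL-Library.Function_Algebras"
begin

text \<open>A real polynomial in the variables indexed by the finite type 'n is represented
by its coefficient function a :: ('n => nat) => real with respect to the scaled
monomial basis x^P = prod x_i^(P i) / P i!, with finite support.\<close>

type_synonym 'n rpoly = "('n \<Rightarrow> nat) \<Rightarrow> real"

text \<open>Partial derivative d_beta: since d_beta (x^P) = x^(P-beta) for beta <= P and 0 otherwise
in the scaled basis, the coefficient of x^Q in d_beta f is a(Q + beta).\<close>
definition pderiv_multi :: "('n \<Rightarrow> nat) \<Rightarrow> 'n rpoly \<Rightarrow> 'n rpoly" where
  "pderiv_multi \<beta> a = (\<lambda>Q. a (\<lambda>i. Q i + \<beta> i))"

definition rpoly_scale :: "real \<Rightarrow> 'n rpoly \<Rightarrow> 'n rpoly" where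
  "rpoly_scale c a = (\<lambda>Q. c * a Q)"

definition derivs_order :: "nat \<Rightarrow> ('n::finite) rpoly \<Rightarrow> 'n rpoly set" where
  "derivs_order k a = {pderiv_multi \<beta> a | \<beta>. (\<Sum>i\<in>UNIV. \<beta> i) = k}"

definition dim_derivs :: "nat \<Rightarrow> ('n::finite) rpoly \<Rightarrow> nat" where
  "dim_derivs k a = vector_space.dim rpoly_scale (derivs_order k a)"

definition supp_size :: "('n::finite \<Rightarrow> nat) \<Rightarrow> nat" where
  "supp_size P = card {i. P i > 0}"

end

theory Submission
  imports Defs "HOL-Library.FuncSet"
begin

text \<open>For every \<open>P \<in> M\<close> and every \<open>k\<close>-subset \<open>A\<close> of the support of \<open>P\<close>, the derivative
  \<open>\<partial>\<^sub>\<beta> f\<close> with \<open>\<beta>\<close> the indicator of \<open>A\<close> contains \<open>x\<^sup>P\<^sup>-\<^sup>\<beta>\<close> with coefficient \<open>a\<^sub>P \<noteq> 0\<close>.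
  These \<open>(sup P choose k)\<close> distinct monomials must all occur in some element of a basis of
  \<open>\<partial>\<^sup>=\<^sup>k f\<close>, and each derivative of \<open>f\<close> has at most \<open>|M|\<close> monomials, so
  \<open>(sup P choose k) \<le> dim \<partial>\<^sup>=\<^sup>k f \<cdot> |M|\<close> for every \<open>P \<in> M\<close>. The claimed bound is a weighted
  average of these inequalities.\<close>

lemma vector_space_rpoly_scale: "vector_space (rpoly_scale :: real \<Rightarrow> 'n rpoly \<Rightarrow> 'n rpoly)"
  by unfold_locales (auto simp: rpoly_scale_def algebra_simps fun_eq_iff)

lemma span_coeff_nonzero_imp_generator:
  fixes B :: "'n rpoly set"
  assumes "v \<in> module.span rpoly_scale B" and "v Q \<noteq> 0"
  shows "\<exists>b\<in>B. b Q \<noteq> 0"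
proof (rule ccontr)
  interpret vector_space "rpoly_scale :: real \<Rightarrow> 'n rpoly \<Rightarrow> 'n rpoly"
    by (rule vector_space_rpoly_scale)
  assume vanish: "\<not> (\<exists>b\<in>B. b Q \<noteq> 0)"
  have "v Q = 0" using assms(1)
  proof (induct rule: span_induct_alt)
    case (step c x y)
    then show ?case using vanish by (auto simp: rpoly_scale_def)
  qed simp
  with assms(2) show False by simp
qed

lemma finite_derivs_order:
  fixes a :: "('n::finite \<Rightarrow> nat) \<Rightarrow> real"
  shows "finite (derivs_order k a)"
proof -
  have "{\<beta>::'n \<Rightarrow> nat. (\<Sum>i\<in>UNIV. \<beta> i) = k} \<subseteq> {\<beta>. \<forall>i. \<beta> i \<le> k}"
    by (auto intro: member_le_sum)
  also have "\<dots> = PiE UNIV (\<lambda>_. {..k})"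
    by (auto simp: PiE_UNIV_domain)
  finally have "finite {\<beta>::'n \<Rightarrow> nat. (\<Sum>i\<in>UNIV. \<beta> i) = k}"
    by (rule finite_subset) (simp add: finite_PiE)
  moreover have "derivs_order k a = (\<lambda>\<beta>. pderiv_multi \<beta> a) ` {\<beta>. (\<Sum>i\<in>UNIV. \<beta> i) = k}"
    by (auto simp: derivs_order_def)
  ultimately show ?thesis by simp
qed

lemma
  assumes "finite {P. a P \<noteq> 0}"
  shows finite_support_pderiv_multi: "finite {Q. pderiv_multi \<beta> a Q \<noteq> 0}"
    and card_support_pderiv_multi_le: "card {Q. pderiv_multi \<beta> a Q \<noteq> 0} \<le> card {P. a P \<noteq> 0}"
proof -
  let ?shift = "\<lambda>Q. (\<lambda>i. Q i + \<beta> i)"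
  have inj: "inj_on ?shift {Q. pderiv_multi \<beta> a Q \<noteq> 0}"
    by (auto simp: inj_on_def fun_eq_iff)
  have sub: "?shift ` {Q. pderiv_multi \<beta> a Q \<noteq> 0} \<subseteq> {P. a P \<noteq> 0}"
    by (auto simp: pderiv_multi_def)
  show "finite {Q. pderiv_multi \<beta> a Q \<noteq> 0}"
    using finite_imageD[OF finite_subset[OF sub assms] inj] .
  show "card {Q. pderiv_multi \<beta> a Q \<noteq> 0} \<le> card {P. a P \<noteq> 0}"
    using card_inj_on_le[OF inj sub assms] .
qed

lemma card_support_union_le:
  assumes "finite {P. a P \<noteq> 0}" and "finite B" and "B \<subseteq> derivs_order k a"
  shows "card (\<Union>b\<in>B. {Q. b Q \<noteq> 0}) \<le> card B * card {P. a P \<noteq> 0}"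
proof -
  have "card (\<Union>b\<in>B. {Q. b Q \<noteq> 0}) \<le> (\<Sum>b\<in>B. card {Q. b Q \<noteq> 0})"
    using assms(2) by (rule card_UN_le)
  also have "\<dots> \<le> (\<Sum>b\<in>B. card {P. a P \<noteq> 0})"
    using assms(3) card_support_pderiv_multi_le[OF assms(1)]
    by (intro sum_mono) (auto simp: derivs_order_def)
  finally show ?thesis by simp
qed

lemma supp_size_choose_le_card_support_span:
  fixes a :: "('n::finite \<Rightarrow> nat) \<Rightarrow> real"
  assumes "a P \<noteq> 0" and "derivs_order k a \<subseteq> module.span rpoly_scale B"
    and "finite (\<Union>b\<in>B. {Q. b Q \<noteq> 0})"
  shows "supp_size P choose k \<le> card (\<Union>b\<in>B. {Q. b Q \<noteq> 0})"
proof -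
  define F where "F = {A. A \<subseteq> {i. P i > 0} \<and> card A = k}"
  define ind where "ind A = (\<lambda>i. if i \<in> A then 1 else (0::nat))" for A :: "'n set"
  have "inj_on (\<lambda>A i. P i - ind A i) F"
  proof (rule inj_onI)
    fix A A' assume "A \<in> F" "A' \<in> F" "(\<lambda>i. P i - ind A i) = (\<lambda>i. P i - ind A' i)"
    moreover have "i \<in> A \<longleftrightarrow> P i - ind A i < P i" if "A \<in> F" for A i
      using that by (auto simp: ind_def F_def)
    ultimately show "A = A'" by (metis subsetI subset_antisym)
  qed
  moreover have "(\<lambda>A i. P i - ind A i) ` F \<subseteq> (\<Union>b\<in>B. {Q. b Q \<noteq> 0})"
  proof clarify
    fix A assume A: "A \<in> F"
    then have "pderiv_multi (ind A) a \<in> derivs_order k a"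
      by (auto simp: derivs_order_def F_def ind_def sum.If_cases)
    moreover have "(\<lambda>i. (P i - ind A i) + ind A i) = P"
      using A by (auto simp: fun_eq_iff ind_def F_def)
    then have "pderiv_multi (ind A) a (\<lambda>i. P i - ind A i) \<noteq> 0"
      using assms(1) by (simp add: pderiv_multi_def)
    ultimately show "(\<lambda>i. P i - ind A i) \<in> (\<Union>b\<in>B. {Q. b Q \<noteq> 0})"
      using assms(2) span_coeff_nonzero_imp_generator by blast
  qed
  ultimately have "card F \<le> card (\<Union>b\<in>B. {Q. b Q \<noteq> 0})"
    using assms(3) by (rule card_inj_on_le)
  moreover have "card F = supp_size P choose k"
    unfolding F_def supp_size_def by (rule n_subsets) simp
  ultimately show ?thesis by simp
qed

lemma supp_size_choose_le_dim_derivs: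
  fixes a :: "('n::finite \<Rightarrow> nat) \<Rightarrow> real"
  assumes "finite {P. a P \<noteq> 0}" and "a P \<noteq> 0"
  shows "supp_size P choose k \<le> dim_derivs k a * card {P. a P \<noteq> 0}"
proof -
  interpret vector_space "rpoly_scale :: real \<Rightarrow> 'n rpoly \<Rightarrow> 'n rpoly"
    by (rule vector_space_rpoly_scale)
  obtain B where B: "B \<subseteq> derivs_order k a" "independent B"
      "derivs_order k a \<subseteq> span B" "card B = dim (derivs_order k a)"
    by (rule basis_exists)
  have "finite B" using B(1) finite_derivs_order finite_subset by blast
  moreover have "finite (\<Union>b\<in>B. {Q. b Q \<noteq> 0})"
    using \<open>finite B\<close> B(1) finite_support_pderiv_multi[OF assms(1)]
    by (auto simp: derivs_order_def)
  ultimately show ?thesis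
    using supp_size_choose_le_card_support_span[OF assms(2) B(3)]
      card_support_union_le[OF assms(1) _ B(1)] B(4)
    by (fastforce simp: dim_derivs_def)
qed

lemma weighted_average_div_card_le:
  fixes c w :: "'a \<Rightarrow> real" and D :: real
  assumes "finite M" and "M \<noteq> {}" and "\<And>x. x \<in> M \<Longrightarrow> w x > 0"
    and "\<And>x. x \<in> M \<Longrightarrow> c x \<le> D * card M"
  shows "(\<Sum>x\<in>M. c x * w x) / (card M * (\<Sum>x\<in>M. w x)) \<le> D"
proof -
  have "(\<Sum>x\<in>M. w x) > 0" and "real (card M) > 0"
    using assms(1-3) by (auto intro: sum_pos simp: card_gt_0_iff)
  moreover have "(\<Sum>x\<in>M. c x * w x) \<le> (\<Sum>x\<in>M. D * card M * w x)"
    using assms(3,4) by (intro sum_mono mult_right_mono) (auto intro: less_imp_le)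
  then have "(\<Sum>x\<in>M. c x * w x) \<le> D * (card M * (\<Sum>x\<in>M. w x))"
    by (simp add: sum_distrib_left sum_distrib_right mult_ac)
  ultimately show ?thesis
    by (simp add: divide_le_eq)
qed

theorem theorem3:
  fixes a :: "('n::finite \<Rightarrow> nat) \<Rightarrow> real" and k :: nat
  assumes fin: "finite {P. a P \<noteq> 0}"
    and nonzero: "{P. a P \<noteq> 0} \<noteq> {}"
  shows "real (dim_derivs k a) \<ge>
    (\<Sum>P\<in>{P. a P \<noteq> 0}. real (supp_size P choose k) * (a P)\<^sup>2) /
    (real (card {P. a P \<noteq> 0}) * (\<Sum>P\<in>{P. a P \<noteq> 0}. (a P)\<^sup>2))"
proof (rule weighted_average_div_card_le[OF fin nonzero])
  fix P assume "P \<in> {P. a P \<noteq> 0}"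
  then have "a P \<noteq> 0" by simp
  then show "(a P)\<^sup>2 > 0" by simp
  from \<open>a P \<noteq> 0\<close> have "supp_size P choose k \<le> dim_derivs k a * card {P. a P \<noteq> 0}"
    by (rule supp_size_choose_le_dim_derivs[OF fin])
  then show "real (supp_size P choose k) \<le> real (dim_derivs k a) * real (card {P. a P \<noteq> 0})"
    unfolding of_nat_mult[symmetric] of_nat_le_iff .
qed

end
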